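(* Let $(E_{-1},E_0,\partial,\rho,S,\circ,\Omega)$ be an $\mathrm{LWX}$ $2$-algebroid over $M$. Let $[\![e_1,e_2]\!]=\frac12(e_1\circ e_2-e_2\circ e_1)$, $J(e_1,e_2,e_3)=[\![[\![e_1,e_2]\!],e_3]\!]+[\![[\![e_2,e_3]\!],e_1]\!]+[\![[\![e_3,e_1]\!],e_2]\!]$ for $e_i\in\Gamma(\mathcal E)$, and define $T:\Gamma(E_0)\times\Gamma(E_0)\times\Gamma(E_{-1})\to C^\infty(M)$ by $$T(e^0_1,e^0_2,e^1)=\tfrac16\big(S(e^0_1,[\![e^0_2,e^1]\!])+S(e^1,[\![e^0_1,e^0_2]\!])+S(e^0_2,[\![e^1,e^0_1]\!])\big).$$ Then for all $e^0,e^0_1,e^0_2,e^0_3\in\Gamma(E_0)$ and $e^1,e^1_1,e^1_2\in\Gamma(E_{-1})$: $$J(e^0_1,e^0_2,e^0_3)=-\partial\Omega(e^0_1,e^0_2,e^0_3),\qquad J(e^0_1,e^0_2,e^1)=\mathcal D T(e^0_1,e^0_2,e^1)-\Omega(e^0_1,e^0_2,\partial e^1),$$ $$T(\partial e^1_1,e^0,e^1_2)=-T(\partial e^1_2,e^0,e^1_1).$$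
   Context: A Leibniz $2$-algebra $(V_{-1},V_0,d,l_2,l_3)$ consists of a complex of real vector spaces $d:V_{-1}\to V_0$, bilinear maps $l_2:V_{-i}\times V_{-j}\to V_{-i-j}$ for $0\le i+j\le 1$, and a trilinear map $l_3:V_0\times V_0\times V_0\to V_{-1}$ such that for all $w,x,y,z\in V_0$, $m,n\in V_{-1}$: (a) $d\,l_2(x,m)=l_2(x,dm)$; (b) $d\,l_2(m,x)=l_2(dm,x)$; (c) $l_2(dm,n)=l_2(m,dn)$; (d) $d\,l_3(x,y,z)=l_2(x,l_2(y,z))-l_2(l_2(x,y),z)-l_2(y,l_2(x,z))$; (e1) $l_3(x,y,dm)=l_2(x,l_2(y,m))-l_2(l_2(x,y),m)-l_2(y,l_2(x,m))$; (e2) $l_3(x,dm,y)=l_2(x,l_2(m,y))-l_2(l_2(x,m),y)-l_2(m,l_2(x,y))$; (e3) $l_3(dm,x,y)=l_2(m,l_2(x,y))-l_2(l_2(m,x),y)-l_2(x,l_2(m,y))$; (f) $l_2(w,l_3(x,y,z))-l_2(x,l_3(w,y,z))+l_2(y,l_3(w,x,z))+l_2(l_3(w,x,y),z)-l_3(l_2(w,x),y,z)-l_3(x,l_2(w,y),z)-l_3(x,y,l_2(w,z))+l_3(w,l_2(x,y),z)+l_3(w,y,l_2(x,z))-l_3(w,x,l_2(y,z))=0$. An $\mathrm{LWX}$ $2$-algebroid $(E_{-1},E_0,\partial,\rho,S,\circ,\Omega)$ over a manifold $M$ consists of vector bundles $E_{-1},E_0$ over $M$ with $\mathcal E=E_{-1}\oplus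 E_0$; a nondegenerate symmetric bilinear form $S$ on $\mathcal E$ for which $E_0$ and $E_{-1}$ are both isotropic; an $\mathbb R$-bilinear operation $\circ$ on $\Gamma(\mathcal E)$ mapping $\Gamma(E_{-i})\times\Gamma(E_{-j})\to\Gamma(E_{-(i+j)})$ for $0\le i+j\le 1$ (and zero on $\Gamma(E_{-1})\times\Gamma(E_{-1})$), skew-symmetric on $\Gamma(E_0)\times\Gamma(E_0)$; an $E_{-1}$-valued $3$-form $\Omega$ on $E_0$; bundle maps $\partial:E_{-1}\to E_0$ and $\rho:E_0\to TM$ ($\rho$ is extended by zero to $E_{-1}$); such that: (i) $(\Gamma(E_{-1}),\Gamma(E_0),\partial,\circ,\Omega)$ is a Leibniz $2$-algebra (with $d=\partial$, $l_2=\circ$, $l_3=\Omega$); (ii) $e\circ e=\frac12\mathcal D S(e,e)$ for all $e\in\Gamma(\mathcal E)$, where $\mathcal D:C^\infty(M)\to\Gamma(E_{-1})$ is defined by $S(\mathcal D f,e^0)=\rho(e^0)(f)$ for all $e^0\in\Gamma(E_0)$; (iii) $S(\partial e^1_1,e^1_2)=S(e^1_1,\partial e^1_2)$ for $e^1_1,e^1_2\in\Gamma(E_{-1})$; (iv) $\rho(e_1)S(e_2,e_3)=S(e_1\circ e_2,e_3)+S(e_2,e_1\circ e_3)$ for all $e_1,e_2,e_3\in\Gamma(\mathcal E)$; (v) $S(\Omega(e^0_1,e^0_2,e^0_3),e^0_4)=-S(e^0_3,\Omega(e^0_1,e^0_2,e^0_4))$ for all $e^0_i\in\Gamma(E_0)$.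 *)

theory Defs
  imports Complex_Main "HOL-Library.Product_Plus"
begin

definition lin_map :: "('k \<Rightarrow> 'a::ab_group_add \<Rightarrow> 'a) \<Rightarrow> ('k \<Rightarrow> 'b::ab_group_add \<Rightarrow> 'b) \<Rightarrow> ('a \<Rightarrow> 'b) \<Rightarrow> bool" where
  "lin_map s1 s2 f \<longleftrightarrow> (\<forall>a b. f (a + b) = f a + f b) \<and> (\<forall>r a. f (s1 r a) = s2 r (f a))"

definition bilin_map :: "('k \<Rightarrow> 'a::ab_group_add \<Rightarrow> 'a) \<Rightarrow> ('k \<Rightarrow> 'b::ab_group_add \<Rightarrow> 'b) \<Rightarrow> ('k \<Rightarrow> 'c::ab_group_add \<Rightarrow> 'c) \<Rightarrow> ('a \<Rightarrow> 'b \<Rightarrow> 'c) \<Rightarrow> bool" where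
  "bilin_map s1 s2 s3 f \<longleftrightarrow> (\<forall>y. lin_map s1 s3 (\<lambda>x. f x y)) \<and> (\<forall>x. lin_map s2 s3 (f x))"

definition trilin_map :: "('k \<Rightarrow> 'a::ab_group_add \<Rightarrow> 'a) \<Rightarrow> ('k \<Rightarrow> 'b::ab_group_add \<Rightarrow> 'b) \<Rightarrow> ('k \<Rightarrow> 'c::ab_group_add \<Rightarrow> 'c) \<Rightarrow> ('k \<Rightarrow> 'd::ab_group_add \<Rightarrow> 'd) \<Rightarrow> ('a \<Rightarrow> 'b \<Rightarrow> 'c \<Rightarrow> 'd) \<Rightarrow> bool" where
  "trilin_map s1 s2 s3 s4 f \<longleftrightarrow>
     (\<forall>y z. lin_map s1 s4 (\<lambda>x. f x y z)) \<and> (\<forall>x z. lin_map s2 s4 (\<lambda>y. f x y z)) \<and> (\<forall>x y. lin_map s3 s4 (f x y))"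

(* Leibniz 2-algebra (V_{-1}, V_0, d, l_2, l_3) over the reals.
   sm1, sm0: real scalar multiplications on V_{-1}, V_0.
   l_2 is given by its graded pieces
     l00 : V_0 x V_0 -> V_0,  l01 : V_0 x V_{-1} -> V_{-1},  l10 : V_{-1} x V_0 -> V_{-1}. *)
definition leibniz2 ::
  "(real \<Rightarrow> 'v1::ab_group_add \<Rightarrow> 'v1) \<Rightarrow> (real \<Rightarrow> 'v0::ab_group_add \<Rightarrow> 'v0) \<Rightarrow> ('v1 \<Rightarrow> 'v0)
   \<Rightarrow> ('v0 \<Rightarrow> 'v0 \<Rightarrow> 'v0) \<Rightarrow> ('v0 \<Rightarrow> 'v1 \<Rightarrow> 'v1) \<Rightarrow> ('v1 \<Rightarrow> 'v0 \<Rightarrow> 'v1)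
   \<Rightarrow> ('v0 \<Rightarrow> 'v0 \<Rightarrow> 'v0 \<Rightarrow> 'v1) \<Rightarrow> bool" where
  "leibniz2 sm1 sm0 d l00 l01 l10 l3 \<longleftrightarrow>
     module sm1 \<and> module sm0 \<and>
     lin_map sm1 sm0 d \<and>
     bilin_map sm0 sm0 sm0 l00 \<and> bilin_map sm0 sm1 sm1 l01 \<and> bilin_map sm1 sm0 sm1 l10 \<and>
     trilin_map sm0 sm0 sm0 sm1 l3 \<and>
     (\<forall>x m. d (l01 x m) = l00 x (d m)) \<and>
     (\<forall>x m. d (l10 m x) = l00 (d m) x) \<and>
     (\<forall>m n. l01 (d m) n = l10 m (d n)) \<and>
     (\<forall>x y z. d (l3 x y z) = l00 x (l00 y z) - l00 (l00 x y) z - l00 y (l00 x z)) \<and>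
     (\<forall>x y m. l3 x y (d m) = l01 x (l01 y m) - l01 (l00 x y) m - l01 y (l01 x m)) \<and>
     (\<forall>x y m. l3 x (d m) y = l01 x (l10 m y) - l10 (l01 x m) y - l10 m (l00 x y)) \<and>
     (\<forall>x y m. l3 (d m) x y = l10 m (l00 x y) - l10 (l10 m x) y - l01 x (l10 m y)) \<and>
     (\<forall>w x y z.
        l01 w (l3 x y z) - l01 x (l3 w y z) + l01 y (l3 w x z) + l10 (l3 w x y) z
        - l3 (l00 w x) y z - l3 x (l00 w y) z - l3 x y (l00 w z)
        + l3 w (l00 x y) z + l3 w y (l00 x z) - l3 w x (l00 y z) = 0)"

(* Sections of \<E> = E_{-1} \<oplus> E_0 are pairs (e^1, e^0) of sections of E_{-1} and E_0.
   The algebra of smooth functions C^\<infinity>(M) is modelled by the ring 'c;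
   smM, smX are the C^\<infinity>(M)-module structures on \<Gamma>(E_{-1}), \<Gamma>(E_0). *)
definition smE :: "('c \<Rightarrow> 'm \<Rightarrow> 'm) \<Rightarrow> ('c \<Rightarrow> 'x \<Rightarrow> 'x) \<Rightarrow> 'c \<Rightarrow> 'm \<times> 'x \<Rightarrow> 'm \<times> 'x" where
  "smE smM smX f e = (smM f (fst e), smX f (snd e))"

definition rhoE :: "('x \<Rightarrow> 'c \<Rightarrow> 'c) \<Rightarrow> 'm \<times> 'x \<Rightarrow> 'c \<Rightarrow> 'c" where
  "rhoE \<rho> e = \<rho> (snd e)"

definition LWX2 ::
  "('c::{comm_ring_1,real_algebra_1} \<Rightarrow> 'm::ab_group_add \<Rightarrow> 'm) \<Rightarrow> ('c \<Rightarrow> 'x::ab_group_add \<Rightarrow> 'x)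
   \<Rightarrow> ('m \<Rightarrow> 'x) \<Rightarrow> ('x \<Rightarrow> 'c \<Rightarrow> 'c) \<Rightarrow> ('m \<times> 'x \<Rightarrow> 'm \<times> 'x \<Rightarrow> 'c)
   \<Rightarrow> ('m \<times> 'x \<Rightarrow> 'm \<times> 'x \<Rightarrow> 'm \<times> 'x) \<Rightarrow> ('x \<Rightarrow> 'x \<Rightarrow> 'x \<Rightarrow> 'm) \<Rightarrow> ('c \<Rightarrow> 'm) \<Rightarrow> bool" where
  "LWX2 smM smX bd \<rho> S circ \<Omega> D \<longleftrightarrow>
     module smM \<and> module smX \<and>
     lin_map smM smX bd \<and>
     (\<forall>x y f. \<rho> (x + y) f = \<rho> x f + \<rho> y f) \<and>
     (\<forall>g x f. \<rho> (smX g x) f = g * \<rho> x f) \<and>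
     (\<forall>x f g. \<rho> x (f + g) = \<rho> x f + \<rho> x g) \<and>
     (\<forall>x r f. \<rho> x (of_real r * f) = of_real r * \<rho> x f) \<and>
     (\<forall>x f g. \<rho> x (f * g) = f * \<rho> x g + \<rho> x f * g) \<and>
     bilin_map (smE smM smX) (smE smM smX) times S \<and>
     (\<forall>e1 e2. S e1 e2 = S e2 e1) \<and>
     (\<forall>e. (\<forall>e'. S e e' = 0) \<longrightarrow> e = 0) \<and>
     (\<forall>x y. S (0, x) (0, y) = 0) \<and>
     (\<forall>m n. S (m, 0) (n, 0) = 0) \<and>
     bilin_map (\<lambda>r. smE smM smX (of_real r)) (\<lambda>r. smE smM smX (of_real r)) (\<lambda>r. smE smM smX (of_real r)) circ \<and>
     (\<forall>x y. fst (circ (0, x) (0, y)) = 0) \<and>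
     (\<forall>x m. snd (circ (0, x) (m, 0)) = 0) \<and>
     (\<forall>x m. snd (circ (m, 0) (0, x)) = 0) \<and>
     (\<forall>m n. circ (m, 0) (n, 0) = 0) \<and>
     (\<forall>x y. circ (0, x) (0, y) = - circ (0, y) (0, x)) \<and>
     trilin_map smX smX smX smM \<Omega> \<and>
     (\<forall>x y z. \<Omega> x y z = - \<Omega> y x z) \<and>
     (\<forall>x y z. \<Omega> x y z = - \<Omega> x z y) \<and>
     (\<forall>f x. S (D f, 0) (0, x) = \<rho> x f) \<and>
     leibniz2 (\<lambda>r. smM (of_real r)) (\<lambda>r. smX (of_real r)) bd
        (\<lambda>x y. snd (circ (0, x) (0, y))) (\<lambda>x m. fst (circ (0, x) (m, 0)))
        (\<lambda>m x. fst (circ (m, 0) (0, x))) \<Omega> \<and>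
     (\<forall>e. circ e e = smE smM smX (of_real (1/2)) (D (S e e), 0)) \<and>
     (\<forall>m n. S (0, bd m) (n, 0) = S (m, 0) (0, bd n)) \<and>
     (\<forall>e1 e2 e3. rhoE \<rho> e1 (S e2 e3) = S (circ e1 e2) e3 + S e2 (circ e1 e3)) \<and>
     (\<forall>x1 x2 x3 x4. S (\<Omega> x1 x2 x3, 0) (0, x4) = - S (0, x3) (\<Omega> x1 x2 x4, 0))"

definition skbr :: "('c::{comm_ring_1,real_algebra_1} \<Rightarrow> 'm::ab_group_add \<Rightarrow> 'm) \<Rightarrow> ('c \<Rightarrow> 'x::ab_group_add \<Rightarrow> 'x)
   \<Rightarrow> ('m \<times> 'x \<Rightarrow> 'm \<times> 'x \<Rightarrow> 'm \<times> 'x) \<Rightarrow> 'm \<times> 'x \<Rightarrow> 'm \<times> 'x \<Rightarrow> 'm \<times> 'x" where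
  "skbr smM smX circ e1 e2 = smE smM smX (of_real (1/2)) (circ e1 e2 - circ e2 e1)"

definition Jac :: "('c::{comm_ring_1,real_algebra_1} \<Rightarrow> 'm::ab_group_add \<Rightarrow> 'm) \<Rightarrow> ('c \<Rightarrow> 'x::ab_group_add \<Rightarrow> 'x)
   \<Rightarrow> ('m \<times> 'x \<Rightarrow> 'm \<times> 'x \<Rightarrow> 'm \<times> 'x) \<Rightarrow> 'm \<times> 'x \<Rightarrow> 'm \<times> 'x \<Rightarrow> 'm \<times> 'x \<Rightarrow> 'm \<times> 'x" where
  "Jac smM smX circ e1 e2 e3 =
     skbr smM smX circ (skbr smM smX circ e1 e2) e3 + skbr smM smX circ (skbr smM smX circ e2 e3) e1
     + skbr smM smX circ (skbr smM smX circ e3 e1) e2"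

definition Tfun :: "('c::{comm_ring_1,real_algebra_1} \<Rightarrow> 'm::ab_group_add \<Rightarrow> 'm) \<Rightarrow> ('c \<Rightarrow> 'x::ab_group_add \<Rightarrow> 'x)
   \<Rightarrow> ('m \<times> 'x \<Rightarrow> 'm \<times> 'x \<Rightarrow> 'c) \<Rightarrow> ('m \<times> 'x \<Rightarrow> 'm \<times> 'x \<Rightarrow> 'm \<times> 'x) \<Rightarrow> 'x \<Rightarrow> 'x \<Rightarrow> 'm \<Rightarrow> 'c" where
  "Tfun smM smX S circ x1 x2 m = of_real (1/6) *
     (S (0, x1) (skbr smM smX circ (0, x2) (m, 0)) + S (m, 0) (skbr smM smX circ (0, x1) (0, x2))
      + S (0, x2) (skbr smM smX circ (m, 0) (0, x1)))"

end

theory Submission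
  imports Defs
begin

(* Write <m, x> = S(m, x) for m in Gamma(E_{-1}) and x in Gamma(E_0). Polarising
   e o e = 1/2 D S(e, e) gives m o x = D <m, x> - x o m, so the skew bracket is o on Gamma(E_0)
   and [[x, m]] = x o m - 1/2 D <m, x>. The first identity is then axiom (d) of the Leibniz
   2-algebra. For the second, invariance (iv) computes <x o m, z> through rho and o on Gamma(E_0),
   and comparing (d) with (e1) via the symmetry of <m, d n> and the skewness (v) of Omega shows
   that rho is a morphism of brackets on the functions <m, z>; pairing both sides with an
   arbitrary y reduces the identity to a computation, and nondegeneracy of S concludes. For the
   third, (a), (b) and the symmetry of <m, d n> make rho(d n) vanish on every <m, x>; with (c)
   this yields <m2, d m1 o x> + <m1, d m2 o x> = - rho(x) <m2, d m1>, which is exactly the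
   antisymmetry of T(d m1, x, m2) = 1/2 <m2, d m1 o x> + 1/4 rho(x) <m2, d m1>. *)

lemma bilin_map_add_left: "bilin_map s1 s2 s3 f \<Longrightarrow> f (a + b) c = f a c + f b c"
  unfolding bilin_map_def lin_map_def by blast

lemma bilin_map_add_right: "bilin_map s1 s2 s3 f \<Longrightarrow> f c (a + b) = f c a + f c b"
  unfolding bilin_map_def lin_map_def by blast

lemma bilin_map_scale_left: "bilin_map s1 s2 s3 f \<Longrightarrow> f (s1 r a) c = s3 r (f a c)"
  unfolding bilin_map_def lin_map_def by blast

lemma of_real_half_add_half: "of_real (1/2) + of_real (1/2) = (1::'a::real_algebra_1)"
  by (simp flip: of_real_add)

lemma sixth_three_half: "of_real (1/6) * (3 * a + (1 + of_real (1/2)) * b)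
    = of_real (1/2) * (a + of_real (1/2) * (b::'a::{comm_ring_1,real_algebra_1}))"
proof -
  have "(1::'a) + of_real (1/2) = of_real (1 + 1/2)"
    by (simp only: of_real_add of_real_1)
  also have "(1 + 1/2 :: real) = 3/2"
    by simp
  finally have "(1::'a) + of_real (1/2) = of_real (3/2)" .
  moreover have "(3::'a) = of_real 3" by simp
  ultimately have "of_real (1/6) * (3 * a + (1 + of_real (1/2)) * b)
      = of_real (1/6 * 3) * a + of_real (1/6 * (3/2)) * b"
    by (simp only: distrib_left mult.assoc[symmetric] of_real_mult)
  also have "\<dots> = of_real (1/2) * a + of_real (1/2 * (1/2)) * b"
    by simp
  also have "\<dots> = of_real (1/2) * (a + of_real (1/2) * b)"
    by (simp only: distrib_left mult.assoc of_real_mult)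
  finally show ?thesis .
qed

locale LWX2_algebroid =
  fixes smM :: "'c::{comm_ring_1,real_algebra_1} \<Rightarrow> 'm::ab_group_add \<Rightarrow> 'm"
    and smX :: "'c \<Rightarrow> 'x::ab_group_add \<Rightarrow> 'x"
    and bd :: "'m \<Rightarrow> 'x" and \<rho> :: "'x \<Rightarrow> 'c \<Rightarrow> 'c"
    and S :: "'m \<times> 'x \<Rightarrow> 'm \<times> 'x \<Rightarrow> 'c"
    and circ :: "'m \<times> 'x \<Rightarrow> 'm \<times> 'x \<Rightarrow> 'm \<times> 'x"
    and \<Omega> :: "'x \<Rightarrow> 'x \<Rightarrow> 'x \<Rightarrow> 'm" and D :: "'c \<Rightarrow> 'm"
  assumes module_M: "module smM" and module_X: "module smX"
    and anchor_add: "\<rho> x (f + g) = \<rho> x f + \<rho> x g"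
    and anchor_of_real: "\<rho> x (of_real r * f) = of_real r * \<rho> x f"
    and S_bilinear: "bilin_map (smE smM smX) (smE smM smX) times S"
    and S_commute: "S e e' = S e' e"
    and S_nondegenerate: "(\<And>e'. S e e' = 0) \<Longrightarrow> e = 0"
    and S_E0_isotropic: "S (0, x) (0, y) = 0"
    and S_E1_isotropic: "S (m, 0) (n, 0) = 0"
    and circ_bilinear: "bilin_map (\<lambda>r. smE smM smX (of_real r)) (\<lambda>r. smE smM smX (of_real r))
                          (\<lambda>r. smE smM smX (of_real r)) circ"
    and circ_E0_E0_fst: "fst (circ (0, x) (0, y)) = 0"
    and circ_E0_E1_snd: "snd (circ (0, x) (m, 0)) = 0"
    and circ_E1_E0_snd: "\<And>x m. snd (circ (m, 0) (0, x)) = 0"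
    and circ_E1_E1: "circ (m, 0) (n, 0) = 0"
    and circ_E0_E0_skew: "circ (0, x) (0, y) = - circ (0, y) (0, x)"
    and S_D: "S (D f, 0) (0, x) = \<rho> x f"
    and leibniz: "leibniz2 (\<lambda>r. smM (of_real r)) (\<lambda>r. smX (of_real r)) bd
        (\<lambda>x y. snd (circ (0, x) (0, y))) (\<lambda>x m. fst (circ (0, x) (m, 0)))
        (\<lambda>m x. fst (circ (m, 0) (0, x))) \<Omega>"
    and circ_self: "circ e e = smE smM smX (of_real (1/2)) (D (S e e), 0)"
    and S_bd: "S (0, bd m) (n, 0) = S (m, 0) (0, bd n)"
    and S_invariant: "rhoE \<rho> e1 (S e2 e3) = S (circ e1 e2) e3 + S e2 (circ e1 e3)"
    and S_Omega: "S (\<Omega> x1 x2 x3, 0) (0, x4) = - S (0, x3) (\<Omega> x1 x2 x4, 0)"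

(* The locale lists the axioms of LWX2 used below; each, atomized, is literally a conjunct of
   LWX2 (hence the explicit quantifier order in circ_E1_E0_snd). *)
lemma LWX2_algebroidI:
  "LWX2 smM smX bd \<rho> S circ \<Omega> D \<Longrightarrow> LWX2_algebroid smM smX bd \<rho> S circ \<Omega> D"
  unfolding LWX2_def LWX2_algebroid_def by (elim conjE) (intro conjI; assumption)

context LWX2_algebroid
begin

definition circ00 :: "'x \<Rightarrow> 'x \<Rightarrow> 'x" where "circ00 x y = snd (circ (0, x) (0, y))"
definition circ01 :: "'x \<Rightarrow> 'm \<Rightarrow> 'm" where "circ01 x m = fst (circ (0, x) (m, 0))"
definition circ10 :: "'m \<Rightarrow> 'x \<Rightarrow> 'm" where "circ10 m x = fst (circ (m, 0) (0, x))"
definition pairing :: "'m \<Rightarrow> 'x \<Rightarrow> 'c" where "pairing m x = S (m, 0) (0, x)"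
definition half :: 'c where "half = of_real (1/2)"

lemma bd_circ01: "bd (circ01 x m) = circ00 x (bd m)"
  using leibniz unfolding leibniz2_def circ00_def circ01_def circ10_def
  by (elim conjE) (simp only:)

lemma bd_circ10: "bd (circ10 m x) = circ00 (bd m) x"
  using leibniz unfolding leibniz2_def circ00_def circ01_def circ10_def
  by (elim conjE) (simp only:)

lemma circ01_bd: "circ01 (bd m) n = circ10 m (bd n)"
  using leibniz unfolding leibniz2_def circ00_def circ01_def circ10_def
  by (elim conjE) (simp only:)

lemma bd_Omega:
  "bd (\<Omega> x y z) = circ00 x (circ00 y z) - circ00 (circ00 x y) z - circ00 y (circ00 x z)"
  using leibniz unfolding leibniz2_def circ00_def circ01_def circ10_def
  by (elim conjE) (simp only:)

lemma Omega_bd: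
  "\<Omega> x y (bd m) = circ01 x (circ01 y m) - circ01 (circ00 x y) m - circ01 y (circ01 x m)"
  using leibniz unfolding leibniz2_def circ00_def circ01_def circ10_def
  by (elim conjE) (simp only:)

interpretation M: module smM by (rule module_M)
interpretation X: module smX by (rule module_X)
interpretation anchor: additive "\<rho> x" for x by unfold_locales (rule anchor_add)

lemma half_add_half: "half + half = 1"
  unfolding half_def by (rule of_real_half_add_half)

lemma M_scale_half_add_half: "smM half m + smM half m = m"
  by (simp add: half_add_half flip: M.scale_left_distrib)

lemma X_scale_half_add_half: "smX half x + smX half x = x"
  by (simp add: half_add_half flip: X.scale_left_distrib)

lemma circ_E0_E0: "circ (0, x) (0, y) = (0, circ00 x y)"
  by (simp add: prod_eq_iff circ_E0_E0_fst circ00_def)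

lemma circ_E0_E1: "circ (0, x) (m, 0) = (circ01 x m, 0)"
  by (simp add: prod_eq_iff circ_E0_E1_snd circ01_def)

lemma circ_E1_E0: "circ (m, 0) (0, x) = (circ10 m x, 0)"
  by (simp add: prod_eq_iff circ_E1_E0_snd circ10_def)

lemma circ00_skew: "circ00 y x = - circ00 x y"
  using circ_E0_E0_skew[of x y] by (simp add: circ00_def)

interpretation circ00_left: additive "\<lambda>x. circ00 x y" for y
  by unfold_locales
    (use bilin_map_add_left[OF circ_bilinear, of "(0, _)" "(0, _)" "(0, y)"] in
      \<open>simp add: circ00_def\<close>)

interpretation circ00_right: additive "circ00 x" for x
  by unfold_locales
    (use bilin_map_add_right[OF circ_bilinear, of "(0, x)" "(0, _)" "(0, _)"] in
      \<open>simp add: circ00_def\<close>)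

interpretation circ01_right: additive "circ01 x" for x
  by unfold_locales
    (use bilin_map_add_right[OF circ_bilinear, of "(0, x)" "(_, 0)" "(_, 0)"] in
      \<open>simp add: circ01_def\<close>)

interpretation pairing_left: additive "\<lambda>m. pairing m x" for x
  by unfold_locales
    (use bilin_map_add_left[OF S_bilinear, of "(_, 0)" "(_, 0)" "(0, x)"] in
      \<open>simp add: pairing_def\<close>)

interpretation pairing_right: additive "pairing m" for m
  by unfold_locales
    (use bilin_map_add_right[OF S_bilinear, of "(m, 0)" "(0, _)" "(0, _)"] in
      \<open>simp add: pairing_def\<close>)

lemma pairing_scale_left: "pairing (smM f m) x = f * pairing m x"
  using bilin_map_scale_left[OF S_bilinear, of f "(m, 0)" "(0, x)"]
  by (simp add: pairing_def smE_def)

lemma S_E0_E1: "S (0, x) (m, 0) = pairing m x"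
  by (simp add: pairing_def S_commute)

lemma pairing_eqI:
  assumes "\<And>x. pairing a x = pairing b x"
  shows "a = b"
proof -
  have "(a - b, 0::'x) = 0"
  proof (rule S_nondegenerate)
    fix e :: "'m \<times> 'x"
    have "S (a - b, 0) e = S (a - b, 0) (fst e, 0) + S (a - b, 0) (0, snd e)"
      using bilin_map_add_right[OF S_bilinear, of "(a - b, 0)" "(fst e, 0)" "(0, snd e)"] by simp
    then show "S (a - b, 0) e = 0"
      using assms[of "snd e"] by (simp add: S_E1_isotropic pairing_left.diff flip: pairing_def)
  qed
  then show ?thesis by (simp add: zero_prod_def)
qed

lemma pairing_D: "pairing (D f) x = \<rho> x f"
  by (simp add: pairing_def S_D)

interpretation D: additive D
  by unfold_locales (rule pairing_eqI, simp add: pairing_D anchor_add pairing_left.add)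

lemma pairing_circ01: "pairing (circ01 x m) z = \<rho> x (pairing m z) - pairing m (circ00 x z)"
  using S_invariant[of "(0, x)" "(m, 0)" "(0, z)"]
  by (simp add: rhoE_def circ_E0_E1 circ_E0_E0 pairing_def)

lemma pairing_bd_commute: "pairing m (bd n) = pairing n (bd m)"
  using S_bd[of n m] by (simp add: pairing_def S_commute)

lemma pairing_Omega_skew: "pairing (\<Omega> x y z) w = - pairing (\<Omega> x y w) z"
  using S_Omega[of x y z w] by (simp add: pairing_def S_commute)

lemma circ10_eq: "circ10 m x = D (pairing m x) - circ01 x m"
proof -
  have split: "(m, x) = (m, 0) + (0, x)" by simp
  have "circ (m, x) (m, x)
      = circ (m, 0) (m, 0) + circ (m, 0) (0, x) + (circ (0, x) (m, 0) + circ (0, x) (0, x))"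
    unfolding split bilin_map_add_left[OF circ_bilinear] bilin_map_add_right[OF circ_bilinear]
    by (simp only: add_ac)
  then have "circ10 m x + circ01 x m = smM half (D (S (m, x) (m, x)))"
    using circ_self[of "(m, x)"]
    by (simp add: circ_E1_E1 circ_E1_E0 circ_E0_E1 circ_E0_E0 smE_def half_def)
  also have "S (m, x) (m, x)
      = S (m, 0) (m, 0) + S (m, 0) (0, x) + (S (0, x) (m, 0) + S (0, x) (0, x))"
    unfolding split bilin_map_add_left[OF S_bilinear] bilin_map_add_right[OF S_bilinear]
    by (simp only: add_ac)
  also have "\<dots> = pairing m x + pairing m x"
    by (simp add: S_E1_isotropic S_E0_isotropic S_E0_E1 flip: pairing_def)
  finally have "circ10 m x + circ01 x m = D (pairing m x)"
    by (simp only: D.add M.scale_right_distrib M_scale_half_add_half)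
  then show ?thesis
    by (simp add: eq_diff_eq)
qed

definition bracket01 :: "'x \<Rightarrow> 'm \<Rightarrow> 'm" where
  "bracket01 x m = circ01 x m - smM half (D (pairing m x))"

lemma skbr_E0_E0: "skbr smM smX circ (0, x) (0, y) = (0, circ00 x y)"
  unfolding skbr_def smE_def circ_E0_E0 half_def[symmetric]
  using circ00_skew[of y x] by (simp add: X_scale_half_add_half X.scale_right_distrib)

lemma skbr_E0_E1: "skbr smM smX circ (0, x) (m, 0) = (bracket01 x m, 0)"
proof -
  have "smM half (circ01 x m - circ10 m x)
      = smM half (circ01 x m) + smM half (circ01 x m) - smM half (D (pairing m x))"
    by (simp add: circ10_eq algebra_simps)
  then show ?thesis
    unfolding skbr_def smE_def circ_E0_E1 circ_E1_E0 half_def[symmetric] bracket01_def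
    by (simp add: M_scale_half_add_half)
qed

lemma skbr_E1_E0: "skbr smM smX circ (m, 0) (0, x) = (- bracket01 x m, 0)"
proof -
  have "skbr smM smX circ (m, 0) (0, x) = - skbr smM smX circ (0, x) (m, 0)"
    by (simp add: skbr_def smE_def half_def[symmetric]
        M.scale_right_diff_distrib X.scale_right_diff_distrib)
  then show ?thesis by (simp add: skbr_E0_E1)
qed

lemma bracket01_minus: "bracket01 x (- m) = - bracket01 x m"
  by (simp add: bracket01_def circ01_right.minus pairing_left.minus D.minus)

lemma Jac_E0_E0_E0: "Jac smM smX circ (0, x1) (0, x2) (0, x3) = (0, - bd (\<Omega> x1 x2 x3))"
proof -
  have "circ00 x1 (circ00 x2 x3) = - circ00 (circ00 x2 x3) x1"
    and "circ00 x2 (circ00 x3 x1) = - circ00 (circ00 x3 x1) x2"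
    and "circ00 x2 (circ00 x1 x3) = - circ00 (circ00 x1 x3) x2"
    and "circ00 x1 x3 = - circ00 x3 x1"
    by (rule circ00_skew)+
  then show ?thesis
    unfolding Jac_def by (simp add: skbr_E0_E0 bd_Omega circ00_left.minus circ00_right.minus)
qed

lemma anchor_circ00_pairing:
  "\<rho> (circ00 x y) (pairing m z) = \<rho> x (\<rho> y (pairing m z)) - \<rho> y (\<rho> x (pairing m z))"
proof -
  \<comment> \<open>expand the left summand by (e1) and the right one by (d)\<close>
  have "pairing (\<Omega> x y (bd m)) z + pairing m (bd (\<Omega> x y z)) = 0"
    by (simp add: pairing_bd_commute[of m] pairing_Omega_skew[of x y z])
  then show ?thesis
    by (simp add: Omega_bd bd_Omega pairing_left.add pairing_left.diff pairing_right.add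
        pairing_right.diff pairing_circ01 anchor.diff algebra_simps)
qed

lemma pairing_bracket01:
  "pairing (bracket01 x m) y
    = \<rho> x (pairing m y) - pairing m (circ00 x y) - half * \<rho> y (pairing m x)"
  by (simp add: bracket01_def pairing_left.diff pairing_circ01 pairing_scale_left pairing_D)

lemma Tfun_eq: "Tfun smM smX S circ x1 x2 m
    = half * (pairing m (circ00 x1 x2) + half * (\<rho> x2 (pairing m x1) - \<rho> x1 (pairing m x2)))"
proof -
  have "Tfun smM smX S circ x1 x2 m = of_real (1/6) * (3 * pairing m (circ00 x1 x2)
      + (1 + half) * (\<rho> x2 (pairing m x1) - \<rho> x1 (pairing m x2)))"
    unfolding Tfun_def skbr_E0_E0 skbr_E0_E1 skbr_E1_E0
    by (simp add: S_E0_E1 pairing_left.minus pairing_bracket01 circ00_skew[of x1 x2]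
        pairing_right.minus algebra_simps flip: pairing_def)
  then show ?thesis
    by (simp only: half_def sixth_three_half)
qed

lemma Jac_E0_E0_E1:
  "Jac smM smX circ (0, x1) (0, x2) (m, 0)
    = (D (Tfun smM smX S circ x1 x2 m) - \<Omega> x1 x2 (bd m), 0)"
proof -
  have "Jac smM smX circ (0, x1) (0, x2) (m, 0)
      = (bracket01 (circ00 x1 x2) m - bracket01 x1 (bracket01 x2 m)
          + bracket01 x2 (bracket01 x1 m), 0)"
    unfolding Jac_def by (simp add: skbr_E0_E0 skbr_E0_E1 skbr_E1_E0 bracket01_minus)
  moreover have "bracket01 (circ00 x1 x2) m - bracket01 x1 (bracket01 x2 m)
        + bracket01 x2 (bracket01 x1 m) = D (Tfun smM smX S circ x1 x2 m) - \<Omega> x1 x2 (bd m)"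
    by (rule pairing_eqI)
      (simp add: pairing_left.add pairing_left.diff pairing_bracket01 pairing_D Tfun_eq Omega_bd
        pairing_circ01 anchor.add anchor.diff anchor.minus anchor_circ00_pairing half_def
        anchor_of_real circ00_skew[of x1 x2] pairing_right.minus algebra_simps)
  ultimately show ?thesis by simp
qed

lemma anchor_bd_pairing: "\<rho> (bd n) (pairing m x) = 0"
proof -
  have "pairing n (circ00 (bd m) x) = pairing (circ10 m x) (bd n)"
    by (simp only: bd_circ10[symmetric] pairing_bd_commute[of n])
  also have "\<dots>
      = \<rho> (bd n) (pairing m x) - \<rho> x (pairing m (bd n)) + pairing m (circ00 x (bd n))"
    by (simp add: circ10_eq pairing_left.diff pairing_D pairing_circ01)
  also have "pairing m (circ00 x (bd n)) = pairing (circ01 x n) (bd m)"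
    by (simp only: bd_circ01[symmetric] pairing_bd_commute[of m])
  also have "\<dots> = \<rho> x (pairing n (bd m)) + pairing n (circ00 (bd m) x)"
    by (simp add: pairing_circ01 circ00_skew[of "bd m" x] pairing_right.minus)
  finally show ?thesis
    by (simp add: pairing_bd_commute[of m n])
qed

lemma pairing_circ00_bd_sum:
  "pairing m2 (circ00 (bd m1) x) + pairing m1 (circ00 (bd m2) x) = - \<rho> x (pairing m2 (bd m1))"
proof -
  have pairing_circ00_bd: "pairing m (circ00 (bd n) x) = - pairing (circ01 (bd n) m) x" for m n
    using pairing_circ01[of "bd n" m x] by (simp add: anchor_bd_pairing)
  have "circ01 (bd m1) m2 = D (pairing m2 (bd m1)) - circ01 (bd m2) m1"
    using circ01_bd[of m1 m2] circ10_eq[of m1 "bd m2"] by (simp add: pairing_bd_commute[of m1])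
  then show ?thesis
    by (simp add: pairing_circ00_bd pairing_left.diff pairing_D)
qed

lemma Tfun_bd_skew: "Tfun smM smX S circ (bd m1) x m2 = - Tfun smM smX S circ (bd m2) x m1"
proof -
  have "Tfun smM smX S circ (bd m1) x m2 + Tfun smM smX S circ (bd m2) x m1
      = half * ((pairing m2 (circ00 (bd m1) x) + pairing m1 (circ00 (bd m2) x))
          + (half + half) * \<rho> x (pairing m2 (bd m1)))"
    by (simp add: Tfun_eq anchor_bd_pairing pairing_bd_commute[of m1 m2] algebra_simps)
  also have "\<dots> = 0"
    by (simp add: pairing_circ00_bd_sum half_add_half)
  finally show ?thesis
    by (simp add: eq_neg_iff_add_eq_0)
qed

end

theorem mainTheorem4:
  fixes smM :: "'c::{comm_ring_1,real_algebra_1} \<Rightarrow> 'm::ab_group_add \<Rightarrow> 'm"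
    and smX :: "'c \<Rightarrow> 'x::ab_group_add \<Rightarrow> 'x"
    and bd :: "'m \<Rightarrow> 'x" and \<rho> :: "'x \<Rightarrow> 'c \<Rightarrow> 'c"
    and S :: "'m \<times> 'x \<Rightarrow> 'm \<times> 'x \<Rightarrow> 'c"
    and circ :: "'m \<times> 'x \<Rightarrow> 'm \<times> 'x \<Rightarrow> 'm \<times> 'x"
    and \<Omega> :: "'x \<Rightarrow> 'x \<Rightarrow> 'x \<Rightarrow> 'm" and D :: "'c \<Rightarrow> 'm"
  assumes reduced: "\<forall>f::'c. f * f = 0 \<longrightarrow> f = 0"
    and lwx: "LWX2 smM smX bd \<rho> S circ \<Omega> D"
  shows "(\<forall>x1 x2 x3. Jac smM smX circ (0, x1) (0, x2) (0, x3) = (0, - bd (\<Omega> x1 x2 x3)))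
       \<and> (\<forall>x1 x2 m. Jac smM smX circ (0, x1) (0, x2) (m, 0)
              = (D (Tfun smM smX S circ x1 x2 m) - \<Omega> x1 x2 (bd m), 0))
       \<and> (\<forall>x m1 m2. Tfun smM smX S circ (bd m1) x m2 = - Tfun smM smX S circ (bd m2) x m1)"
proof -
  interpret LWX2_algebroid smM smX bd \<rho> S circ \<Omega> D
    using lwx by (rule LWX2_algebroidI)
  show ?thesis
    using Jac_E0_E0_E0 Jac_E0_E0_E1 Tfun_bd_skew by blast
qed

end
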